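(* Let $\mathbb F\in\{\mathbb R,\mathbb C\}$. Suppose the Lie algebra $\mathfrak g$ is contracted to the Lie algebra $\hat{\mathfrak g}$ by a contraction matrix $\hat U_\varepsilon$ whose entries are polynomials in $\varepsilon$, and $\hat{\mathfrak g}$ is contracted to the Lie algebra $\tilde{\mathfrak g}$ by a contraction matrix $\tilde U_\varepsilon$ whose entries are polynomials in $\varepsilon$ (both nonsingular for $\varepsilon\in(0,1]$). Then $\mathfrak g$ is contracted to $\tilde{\mathfrak g}$ by a contraction matrix whose entries are polynomials in the contraction parameter.
   Context: All algebras are structures on the same $n$-dimensional space, given by structure constants in a fixed basis. A continuous $U:(0,1]\to GL_n(\mathbb F)$ contracts the algebra with structure constants $c^k_{ij}$ to the algebra with structure constants $c'^{k'}_{i'j'}$ if $\lim_{\varepsilon\to0^+}(U_\varepsilon)^i_{i'}(U_\varepsilon)^j_{j'}(U^{-1}_\varepsilon)^{k'}_kc^k_{ij}=c'^{k'}_{i'j'}$ for all indices (summation over repeated indices). *)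

theory Defs
  imports "HOL-Analysis.Analysis" "HOL-Computational_Algebra.Polynomial"
begin

text \<open>Structure constants on an n-dimensional space with basis indexed by the finite
  type 'n: c i j k is c^k_{ij}, i.e. [e_i, e_j] = sum_k c^k_{ij} e_k.\<close>

definition is_lie_algebra :: "('n::finite \<Rightarrow> 'n \<Rightarrow> 'n \<Rightarrow> 'a::field) \<Rightarrow> bool" where
  "is_lie_algebra c \<longleftrightarrow>
     (\<forall>i j k. c i j k = - c j i k) \<and>
     (\<forall>i j k m. (\<Sum>l\<in>UNIV. c i j l * c l k m + c j k l * c l i m + c k i l * c l j m) = 0)"

text \<open>U contracts c to c' (contraction parameter eps in (0,1], limit eps -> 0+).
  Matrix entry (U eps)^i_{i'} is  U eps $ i $ i'.\<close>

definition contracts ::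
  "('n::finite \<Rightarrow> 'n \<Rightarrow> 'n \<Rightarrow> 'a::{real_normed_field}) \<Rightarrow> (real \<Rightarrow> 'a^'n^'n)
     \<Rightarrow> ('n \<Rightarrow> 'n \<Rightarrow> 'n \<Rightarrow> 'a) \<Rightarrow> bool" where
  "contracts c U c' \<longleftrightarrow>
     (\<forall>\<epsilon>\<in>{0<..1}. invertible (U \<epsilon>)) \<and>
     continuous_on {0<..1} U \<and>
     (\<forall>i' j' k'. ((\<lambda>\<epsilon>. \<Sum>i\<in>UNIV. \<Sum>j\<in>UNIV. \<Sum>k\<in>UNIV.
          U \<epsilon> $ i $ i' * U \<epsilon> $ j $ j' * matrix_inv (U \<epsilon>) $ k' $ k * c i j k)
        \<longlongrightarrow> c' i' j' k') (at_right 0))"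

definition poly_matrix_fun :: "(real \<Rightarrow> 'a::real_normed_field^'n::finite^'n) \<Rightarrow> bool" where
  "poly_matrix_fun U \<longleftrightarrow>
     (\<exists>p :: 'n \<Rightarrow> 'n \<Rightarrow> 'a poly. \<forall>\<epsilon>. \<forall>i j. U \<epsilon> $ i $ j = poly (p i j) (of_real \<epsilon>))"

end

theory Submission
  imports Defs
begin

text \<open>Take \<open>U\<^sub>\<epsilon> = Uh(\<epsilon>\<^sup>N) Ut(\<epsilon>)\<close>. Transforming \<open>g\<close> by it gives the \<open>Ut(\<epsilon>)\<close>-transform of
  \<open>gh\<close>, which tends to \<open>gt\<close>, plus the \<open>Ut(\<epsilon>)\<close>-transform of the deviation of the
  \<open>Uh(\<epsilon>\<^sup>N)\<close>-transform of \<open>g\<close> from \<open>gh\<close>. By Cramer's rule everything is rational in \<open>\<epsilon>\<close>: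
  the entries of \<open>Ut(\<epsilon>)\<^sup>-\<^sup>1\<close> have a pole of order at most \<open>m\<close>, the order of vanishing of
  \<open>det Ut\<close> at 0, while the deviation is a rational function of \<open>\<delta> = \<epsilon>\<^sup>N\<close> tending to 0, hence
  \<open>O(\<delta>)\<close>. With \<open>N = m + 1\<close> the second summand therefore tends to 0.\<close>

lemma poly_order_0_decomp:
  fixes p :: "'a::idom poly"
  assumes "p \<noteq> 0"
  obtains q where "poly q 0 \<noteq> 0" "\<And>x. poly p x = x ^ order 0 p * poly q x"
proof -
  obtain q where q: "p = [:0, 1:] ^ order 0 p * q" "\<not> [:0, 1:] dvd q"
    using order_decomp[OF assms, of 0] by auto
  show thesis
  proof
    show "poly q 0 \<noteq> 0" using q(2) by (simp add: poly_eq_0_iff_dvd)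
    show "poly p x = x ^ order 0 p * poly q x" for x
      by (subst q(1)) (simp add: poly_power)
  qed
qed

lemma tendsto_poly_of_real_at_right_0:
  "((\<lambda>\<epsilon>. poly p (of_real \<epsilon> :: 'a::real_normed_field)) \<longlongrightarrow> poly p 0) (at_right 0)"
proof -
  have "((\<lambda>\<epsilon>::real. of_real \<epsilon> :: 'a) \<longlongrightarrow> 0) (at_right 0)"
    using tendsto_of_real[OF tendsto_ident_at[of "0::real" "{0<..}"], where 'a='a] by simp
  then show ?thesis by (rule tendsto_poly)
qed

lemma rational_tendsto_zero_if_order_less:
  fixes P Q :: "'a::real_normed_field poly"
  assumes "P \<noteq> 0" "Q \<noteq> 0" "order 0 Q < order 0 P"
  shows "((\<lambda>\<epsilon>. poly P (of_real \<epsilon>) / poly Q (of_real \<epsilon>)) \<longlongrightarrow> 0) (at_right 0)"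
proof -
  obtain P1 where P1: "\<And>x. poly P x = x ^ order 0 P * poly P1 x"
    using poly_order_0_decomp[OF assms(1)] by blast
  obtain Q1 where Q1: "poly Q1 0 \<noteq> 0" "\<And>x. poly Q x = x ^ order 0 Q * poly Q1 x"
    using poly_order_0_decomp[OF assms(2)] by blast
  let ?x = "\<lambda>\<epsilon>::real. of_real \<epsilon> :: 'a" and ?k = "order 0 P - order 0 Q"
  have "((\<lambda>\<epsilon>. poly [:0, 1:] (?x \<epsilon>) ^ ?k * (poly P1 (?x \<epsilon>) / poly Q1 (?x \<epsilon>)))
          \<longlongrightarrow> poly [:0, 1:] 0 ^ ?k * (poly P1 0 / poly Q1 0)) (at_right 0)"
    using Q1(1) by (intro tendsto_intros tendsto_poly_of_real_at_right_0)
  then have "((\<lambda>\<epsilon>. ?x \<epsilon> ^ ?k * (poly P1 (?x \<epsilon>) / poly Q1 (?x \<epsilon>))) \<longlongrightarrow> 0) (at_right 0)"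
    using assms(3) by (simp add: zero_power)
  moreover have "eventually (\<lambda>\<epsilon>. ?x \<epsilon> ^ ?k * (poly P1 (?x \<epsilon>) / poly Q1 (?x \<epsilon>))
      = poly P (?x \<epsilon>) / poly Q (?x \<epsilon>)) (at_right 0)"
  proof (rule eventually_mono[OF eventually_at_right_less])
    fix \<epsilon> :: real assume "0 < \<epsilon>"
    moreover have "?x \<epsilon> ^ order 0 P = ?x \<epsilon> ^ ?k * ?x \<epsilon> ^ order 0 Q"
      using assms(3) by (simp flip: power_add)
    ultimately show "?x \<epsilon> ^ ?k * (poly P1 (?x \<epsilon>) / poly Q1 (?x \<epsilon>)) = poly P (?x \<epsilon>) / poly Q (?x \<epsilon>)"
      by (simp add: P1 Q1)
  qed
  ultimately show ?thesis
    by (rule Lim_transform_eventually)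
qed

lemma order_less_if_rational_tendsto_zero:
  fixes P Q :: "'a::real_normed_field poly"
  assumes "P \<noteq> 0" "Q \<noteq> 0"
    and lim: "((\<lambda>\<epsilon>. poly P (of_real \<epsilon>) / poly Q (of_real \<epsilon>)) \<longlongrightarrow> 0) (at_right 0)"
  shows "order 0 Q < order 0 P"
proof (rule ccontr)
  assume "\<not> order 0 Q < order 0 P"
  obtain P1 where P1: "poly P1 0 \<noteq> 0" "\<And>x. poly P x = x ^ order 0 P * poly P1 x"
    using poly_order_0_decomp[OF assms(1)] by blast
  obtain Q1 where Q1: "poly Q1 0 \<noteq> 0" "\<And>x. poly Q x = x ^ order 0 Q * poly Q1 x"
    using poly_order_0_decomp[OF assms(2)] by blast
  let ?x = "\<lambda>\<epsilon>::real. of_real \<epsilon> :: 'a" and ?k = "order 0 Q - order 0 P"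
  have "((\<lambda>\<epsilon>. poly P (?x \<epsilon>) / poly Q (?x \<epsilon>) * poly [:0, 1:] (?x \<epsilon>) ^ ?k)
          \<longlongrightarrow> 0 * poly [:0, 1:] 0 ^ ?k) (at_right 0)"
    by (intro tendsto_intros lim tendsto_poly_of_real_at_right_0)
  then have "((\<lambda>\<epsilon>. poly P (?x \<epsilon>) / poly Q (?x \<epsilon>) * ?x \<epsilon> ^ ?k) \<longlongrightarrow> 0) (at_right 0)"
    by simp
  moreover have "eventually (\<lambda>\<epsilon>. poly P (?x \<epsilon>) / poly Q (?x \<epsilon>) * ?x \<epsilon> ^ ?k
      = poly P1 (?x \<epsilon>) / poly Q1 (?x \<epsilon>)) (at_right 0)"
  proof (rule eventually_mono[OF eventually_at_right_less])
    fix \<epsilon> :: real assume "0 < \<epsilon>"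
    moreover have "?x \<epsilon> ^ order 0 Q = ?x \<epsilon> ^ order 0 P * ?x \<epsilon> ^ ?k"
      using \<open>\<not> order 0 Q < order 0 P\<close> by (simp flip: power_add)
    ultimately show "poly P (?x \<epsilon>) / poly Q (?x \<epsilon>) * ?x \<epsilon> ^ ?k = poly P1 (?x \<epsilon>) / poly Q1 (?x \<epsilon>)"
      by (simp add: P1 Q1)
  qed
  ultimately have "((\<lambda>\<epsilon>. poly P1 (?x \<epsilon>) / poly Q1 (?x \<epsilon>)) \<longlongrightarrow> 0) (at_right 0)"
    by (rule Lim_transform_eventually)
  moreover have "((\<lambda>\<epsilon>. poly P1 (?x \<epsilon>) / poly Q1 (?x \<epsilon>)) \<longlongrightarrow> poly P1 0 / poly Q1 0) (at_right 0)"
    using Q1(1) by (intro tendsto_divide tendsto_poly_of_real_at_right_0)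
  ultimately have "poly P1 0 / poly Q1 0 = 0"
    using tendsto_unique trivial_limit_at_right_real by blast
  with P1(1) Q1(1) show False
    by simp
qed

lemma pcompose_x_power: "pcompose ([:0, 1:] ^ k) r = r ^ k"
proof -
  have "pcompose [:0, 1:] r = r"
    by (simp add: pcompose_pCons)
  then show ?thesis
    by (induct k) (simp_all only: power_0 power_Suc pcompose_mult pcompose_1)
qed

lemma order_0_pcompose_monom:
  fixes p :: "'a::idom poly"
  assumes "p \<noteq> 0" "0 < N"
  shows "order 0 (pcompose p (monom 1 N)) = N * order 0 p"
proof -
  obtain q where q: "p = [:0, 1:] ^ order 0 p * q" "\<not> [:0, 1:] dvd q"
    using order_decomp[OF assms(1), of 0] by auto
  have "poly (pcompose q (monom 1 N)) 0 = poly q 0"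
    using assms(2) by (simp add: poly_pcompose poly_monom zero_power)
  with q(2) have "poly (pcompose q (monom 1 N)) 0 \<noteq> 0"
    by (simp add: poly_eq_0_iff_dvd)
  then have q_nz: "pcompose q (monom 1 N) \<noteq> 0" and q_order: "order 0 (pcompose q (monom 1 N)) = 0"
    by (auto intro: order_0I)
  have "pcompose p (monom 1 N) = pcompose ([:0, 1:] ^ order 0 p) (monom 1 N) * pcompose q (monom 1 N)"
    by (subst q(1)) (simp only: pcompose_mult)
  also have "\<dots> = monom 1 (N * order 0 p) * pcompose q (monom 1 N)"
    by (simp only: pcompose_x_power monom_power power_one mult.commute)
  also have "order 0 \<dots> = order 0 (monom (1::'a) (N * order 0 p)) + order 0 (pcompose q (monom 1 N))"
    using q_nz by (intro order_mult) simp
  finally show ?thesis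
    using q_order by simp
qed

lemma rational_mult_compose_power_tendsto_zero:
  fixes Q D R E :: "'a::real_normed_field poly"
  assumes "D \<noteq> 0" "E \<noteq> 0" "order 0 D < N"
    and "((\<lambda>\<epsilon>. poly R (of_real \<epsilon>) / poly E (of_real \<epsilon>)) \<longlongrightarrow> 0) (at_right 0)"
  shows "((\<lambda>\<epsilon>. poly Q (of_real \<epsilon>) / poly D (of_real \<epsilon>)
              * (poly R (of_real (\<epsilon> ^ N)) / poly E (of_real (\<epsilon> ^ N)))) \<longlongrightarrow> 0) (at_right 0)"
proof (cases "Q = 0 \<or> R = 0")
  case True
  then show ?thesis by auto
next
  case False
  then have "Q \<noteq> 0" "R \<noteq> 0" by auto
  have "0 < N" using assms(3) by simp
  define X where "X = (monom 1 N :: 'a poly)"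
  have "0 < degree X"
    using \<open>0 < N\<close> by (simp add: X_def degree_monom_eq)
  then have RX: "pcompose R X \<noteq> 0" and EX: "pcompose E X \<noteq> 0"
    using \<open>R \<noteq> 0\<close> assms(2) by (simp_all add: pcompose_eq_0_iff)
  have "order 0 E < order 0 R"
    using \<open>R \<noteq> 0\<close> assms(2,4) by (rule order_less_if_rational_tendsto_zero)
  then have "order 0 D + N * order 0 E < order 0 Q + N * order 0 R"
    using assms(3) mult_le_mono2[of "Suc (order 0 E)" "order 0 R" N] by simp
  then have "order 0 (D * pcompose E X) < order 0 (Q * pcompose R X)"
    using RX EX \<open>Q \<noteq> 0\<close> \<open>R \<noteq> 0\<close> assms(1,2) \<open>0 < N\<close>
    by (simp add: order_mult X_def order_0_pcompose_monom)
  then have "((\<lambda>\<epsilon>. poly (Q * pcompose R X) (of_real \<epsilon>) / poly (D * pcompose E X) (of_real \<epsilon>))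
               \<longlongrightarrow> 0) (at_right 0)"
    using RX EX \<open>Q \<noteq> 0\<close> assms(1) by (intro rational_tendsto_zero_if_order_less) simp_all
  then show ?thesis
    by (simp add: X_def poly_pcompose poly_monom times_divide_times_eq)
qed

lemma matrix_inv_right_left:
  fixes A :: "'a::semiring_1^'n^'m"
  assumes "invertible A"
  shows matrix_inv_right: "A ** matrix_inv A = mat 1"
    and matrix_inv_left: "matrix_inv A ** A = mat 1"
  using someI_ex[OF assms[unfolded invertible_def]] by (simp_all add: matrix_inv_def)

lemma matrix_inv_unique:
  fixes A B :: "'a::semiring_1^'n^'n"
  assumes "A ** B = mat 1" "B ** A = mat 1"
  shows "matrix_inv A = B"
proof -
  have "invertible A"
    using assms invertible_def by blast
  then have "matrix_inv A = matrix_inv A ** (A ** B)"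
    using assms(1) by simp
  also have "\<dots> = B"
    using \<open>invertible A\<close> by (simp add: matrix_mul_assoc matrix_inv_left)
  finally show ?thesis .
qed

lemma matrix_inv_mult:
  fixes A B :: "'a::semiring_1^'n^'n"
  assumes "invertible A" "invertible B"
  shows "matrix_inv (A ** B) = matrix_inv B ** matrix_inv A"
proof (rule matrix_inv_unique)
  have "A ** B ** (matrix_inv B ** matrix_inv A) = A ** (B ** matrix_inv B) ** matrix_inv A"
    by (simp add: matrix_mul_assoc)
  then show "A ** B ** (matrix_inv B ** matrix_inv A) = mat 1"
    using assms by (simp add: matrix_inv_right)
  have "matrix_inv B ** matrix_inv A ** (A ** B) = matrix_inv B ** (matrix_inv A ** A) ** B"
    by (simp add: matrix_mul_assoc)
  then show "matrix_inv B ** matrix_inv A ** (A ** B) = mat 1"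
    using assms by (simp add: matrix_inv_left)
qed

definition adjugate :: "'a::comm_ring_1^'n::finite^'n \<Rightarrow> 'a^'n^'n" where
  "adjugate A = (\<chi> k j. det (\<chi> i l. if l = k then of_bool (i = j) else A $ i $ l))"

lemma matrix_inv_eq_adjugate_div_det:
  fixes A :: "'a::field^'n::finite^'n"
  assumes "det A \<noteq> 0"
  shows "matrix_inv A $ k $ j = adjugate A $ k $ j / det A"
proof -
  have "invertible A"
    using assms invertible_det_nz by blast
  then have "(A ** matrix_inv A) $ i $ j = mat 1 $ i $ j" for i
    by (simp add: matrix_inv_right)
  then have "A *v (\<chi> k. matrix_inv A $ k $ j) = (\<chi> i. of_bool (i = j))"
    by (simp add: vec_eq_iff matrix_vector_mult_def matrix_matrix_mult_def mat_def)
  then have "(\<chi> k. matrix_inv A $ k $ j)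
      = (\<chi> k. det (\<chi> i l. if l = k then (\<chi> i. of_bool (i = j)) $ i else A $ i $ l) / det A)"
    using cramer[OF assms] by blast
  from arg_cong[OF this, of "\<lambda>v. v $ k"] show ?thesis
    by (simp add: adjugate_def cong: if_cong)
qed

definition eval_poly_matrix :: "'a::comm_semiring_1 poly^'n^'m \<Rightarrow> 'a \<Rightarrow> 'a^'n^'m" where
  "eval_poly_matrix P x = (\<chi> i j. poly (P $ i $ j) x)"

lemma det_eval_poly_matrix:
  fixes P :: "'a::comm_ring_1 poly^'n::finite^'n"
  shows "det (eval_poly_matrix P x) = poly (det P) x"
  by (simp add: det_def eval_poly_matrix_def poly_sum poly_prod)

lemma adjugate_eval_poly_matrix:
  fixes P :: "'a::comm_ring_1 poly^'n::finite^'n"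
  shows "adjugate (eval_poly_matrix P x) = eval_poly_matrix (adjugate P) x"
proof -
  have "(\<chi> i l. if l = k then of_bool (i = j) else eval_poly_matrix P x $ i $ l)
      = eval_poly_matrix (\<chi> i l. if l = k then of_bool (i = j) else P $ i $ l) x" for k j
    by (simp add: eval_poly_matrix_def vec_eq_iff)
  then have "adjugate (eval_poly_matrix P x) $ k $ j = poly (adjugate P $ k $ j) x" for k j
    by (simp only: adjugate_def vec_lambda_beta det_eval_poly_matrix)
  then show ?thesis
    by (simp add: eval_poly_matrix_def vec_eq_iff)
qed

lemma eval_poly_matrix_mult:
  fixes P :: "'a::comm_semiring_1 poly^'n::finite^'m" and Q :: "'a poly^'k^'n"
  shows "eval_poly_matrix (P ** Q) x = eval_poly_matrix P x ** eval_poly_matrix Q x"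
  by (simp add: eval_poly_matrix_def matrix_matrix_mult_def poly_sum vec_eq_iff)

lemma poly_matrix_fun_iff_eval:
  "poly_matrix_fun U \<longleftrightarrow> (\<exists>P. \<forall>\<epsilon>. U \<epsilon> = eval_poly_matrix P (of_real \<epsilon>))"
proof
  assume "poly_matrix_fun U"
  then obtain p where "\<forall>\<epsilon> i j. U \<epsilon> $ i $ j = poly (p i j) (of_real \<epsilon>)"
    unfolding poly_matrix_fun_def by blast
  then have "\<forall>\<epsilon>. U \<epsilon> = eval_poly_matrix (\<chi> i j. p i j) (of_real \<epsilon>)"
    by (simp add: eval_poly_matrix_def vec_eq_iff)
  then show "\<exists>P. \<forall>\<epsilon>. U \<epsilon> = eval_poly_matrix P (of_real \<epsilon>)" ..
next
  assume "\<exists>P. \<forall>\<epsilon>. U \<epsilon> = eval_poly_matrix P (of_real \<epsilon>)"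
  then show "poly_matrix_fun U"
    unfolding poly_matrix_fun_def eval_poly_matrix_def by force
qed

lemma poly_matrix_fun_continuous_on:
  assumes "poly_matrix_fun U"
  shows "continuous_on S U"
proof -
  obtain P where "\<And>\<epsilon>. U \<epsilon> = eval_poly_matrix P (of_real \<epsilon>)"
    using assms poly_matrix_fun_iff_eval by blast
  then show ?thesis
    unfolding eval_poly_matrix_def
    by (simp add: continuous_on_vec_lambda continuous_on_poly continuous_on_of_real_id)
qed

lemma poly_matrix_fun_mult:
  assumes "poly_matrix_fun A" "poly_matrix_fun B"
  shows "poly_matrix_fun (\<lambda>\<epsilon>. A \<epsilon> ** B \<epsilon>)"
  using assms unfolding poly_matrix_fun_iff_eval by (metis eval_poly_matrix_mult)

lemma poly_matrix_fun_compose_power: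
  assumes "poly_matrix_fun A"
  shows "poly_matrix_fun (\<lambda>\<epsilon>. A (\<epsilon> ^ N))"
proof -
  obtain P where "\<And>\<epsilon>. A \<epsilon> = eval_poly_matrix P (of_real \<epsilon>)"
    using assms poly_matrix_fun_iff_eval by blast
  then have "A (\<epsilon> ^ N) = eval_poly_matrix (\<chi> i j. pcompose (P $ i $ j) (monom 1 N)) (of_real \<epsilon>)" for \<epsilon>
    by (simp add: eval_poly_matrix_def poly_pcompose poly_monom)
  then show ?thesis
    unfolding poly_matrix_fun_iff_eval by blast
qed

definition basis_change :: "'a::field^'n::finite^'n \<Rightarrow> ('n \<Rightarrow> 'n \<Rightarrow> 'n \<Rightarrow> 'a) \<Rightarrow> 'n \<Rightarrow> 'n \<Rightarrow> 'n \<Rightarrow> 'a" where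
  "basis_change U c i' j' k' =
     (\<Sum>i\<in>UNIV. \<Sum>j\<in>UNIV. \<Sum>k\<in>UNIV. U $ i $ i' * U $ j $ j' * matrix_inv U $ k' $ k * c i j k)"

lemma contracts_iff_basis_change:
  "contracts c U c' \<longleftrightarrow>
     (\<forall>\<epsilon>\<in>{0<..1}. invertible (U \<epsilon>)) \<and> continuous_on {0<..1} U \<and>
     (\<forall>i j k. ((\<lambda>\<epsilon>. basis_change (U \<epsilon>) c i j k) \<longlongrightarrow> c' i j k) (at_right 0))"
  unfolding contracts_def basis_change_def ..

lemma sum_swap_triple:
  "(\<Sum>i\<in>I. \<Sum>j\<in>J. \<Sum>k\<in>K. \<Sum>p\<in>P. \<Sum>q\<in>Q. \<Sum>r\<in>R. f i j k p q r)
   = (\<Sum>p\<in>P. \<Sum>q\<in>Q. \<Sum>r\<in>R. \<Sum>i\<in>I. \<Sum>j\<in>J. \<Sum>k\<in>K. f i j k p q r)"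
  \<comment> \<open>each pass moves one outer sum innermost; this terminates only because \<open>I\<close>, \<open>J\<close>, \<open>K\<close>
      are variables distinct from the other index sets\<close>
  by (simp only: sum.swap[where A = I]) (simp only: sum.swap[where A = J], simp only: sum.swap[where A = K])

lemma basis_change_mult:
  fixes A B :: "'a::field^'n::finite^'n"
  assumes "invertible A" "invertible B"
  shows "basis_change (A ** B) c = basis_change B (basis_change A c)"
proof (intro ext)
  fix a b d
  let ?F = "\<lambda>i j k p q r. A $ i $ p * B $ p $ a * (A $ j $ q * B $ q $ b)
                          * (matrix_inv B $ d $ r * matrix_inv A $ r $ k) * c i j k"
  have "basis_change (A ** B) c a b d = (\<Sum>i\<in>UNIV. \<Sum>j\<in>UNIV. \<Sum>k\<in>UNIV. \<Sum>q\<in>UNIV. \<Sum>p\<in>UNIV. \<Sum>r\<in>UNIV. ?F i j k p q r)"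
    unfolding basis_change_def matrix_inv_mult[OF assms]
    unfolding matrix_matrix_mult_def
    by (simp add: sum_distrib_left sum_distrib_right mult_ac)
  also have "\<dots> = (\<Sum>q\<in>UNIV. \<Sum>p\<in>UNIV. \<Sum>r\<in>UNIV. \<Sum>i\<in>UNIV. \<Sum>j\<in>UNIV. \<Sum>k\<in>UNIV. ?F i j k p q r)"
    by (rule sum_swap_triple)
  also have "\<dots> = (\<Sum>p\<in>UNIV. \<Sum>q\<in>UNIV. \<Sum>r\<in>UNIV. \<Sum>i\<in>UNIV. \<Sum>j\<in>UNIV. \<Sum>k\<in>UNIV. ?F i j k p q r)"
    by (rule sum.swap)
  also have "\<dots> = basis_change B (basis_change A c) a b d"
    by (simp add: basis_change_def sum_distrib_left sum_distrib_right mult_ac)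
  finally show "basis_change (A ** B) c a b d = basis_change B (basis_change A c) a b d" .
qed

lemma basis_change_diff:
  "basis_change U (c - c') i j k = basis_change U c i j k - basis_change U c' i j k"
  by (simp add: basis_change_def ring_distribs sum_subtractf)

lemma invertible_eval_poly_matrix_iff:
  fixes P :: "'a::field poly^'n::finite^'n"
  shows "invertible (eval_poly_matrix P x) \<longleftrightarrow> poly (det P) x \<noteq> 0"
  by (simp add: invertible_det_nz det_eval_poly_matrix)

lemma matrix_inv_eval_poly_matrix:
  fixes P :: "'a::field poly^'n::finite^'n"
  assumes "poly (det P) x \<noteq> 0"
  shows "matrix_inv (eval_poly_matrix P x) $ k $ j = poly (adjugate P $ k $ j) x / poly (det P) x"
  using assms
  by (simp add: matrix_inv_eq_adjugate_div_det det_eval_poly_matrix adjugate_eval_poly_matrix)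
    (simp add: eval_poly_matrix_def)

lemma basis_change_eval_poly_matrix:
  fixes P :: "'a::field poly^'n::finite^'n"
  assumes "poly (det P) x \<noteq> 0"
  shows "basis_change (eval_poly_matrix P x) c i' j' k'
    = poly (\<Sum>i\<in>UNIV. \<Sum>j\<in>UNIV. \<Sum>k\<in>UNIV. P $ i $ i' * P $ j $ j' * adjugate P $ k' $ k * [:c i j k:]) x
      / poly (det P) x"
proof -
  have "matrix_inv (eval_poly_matrix P x) $ k' $ k = poly (adjugate P $ k' $ k) x / poly (det P) x" for k
    using assms by (rule matrix_inv_eval_poly_matrix)
  then show ?thesis
    by (simp add: basis_change_def eval_poly_matrix_def poly_sum sum_divide_distrib mult_ac)
qed

lemma contracts_poly_matrix_deviation_rational:
  fixes P :: "'a::real_normed_field poly^'n::finite^'n"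
  assumes "contracts c (\<lambda>\<epsilon>. eval_poly_matrix P (of_real \<epsilon>)) c'"
  obtains R where
    "\<And>\<epsilon>. \<epsilon> \<in> {0<..1} \<Longrightarrow> basis_change (eval_poly_matrix P (of_real \<epsilon>)) c i j k - c' i j k
                         = poly R (of_real \<epsilon>) / poly (det P) (of_real \<epsilon>)"
    "((\<lambda>\<epsilon>. poly R (of_real \<epsilon>) / poly (det P) (of_real \<epsilon>)) \<longlongrightarrow> 0) (at_right 0)"
proof
  let ?S = "\<Sum>a\<in>UNIV. \<Sum>b\<in>UNIV. \<Sum>d\<in>UNIV. P $ a $ i * P $ b $ j * adjugate P $ k $ d * [:c a b d:]"
  have nz: "poly (det P) (of_real \<epsilon>) \<noteq> 0" if "\<epsilon> \<in> {0<..1}" for \<epsilon>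
    using assms that by (simp add: contracts_iff_basis_change invertible_eval_poly_matrix_iff)
  show dev: "basis_change (eval_poly_matrix P (of_real \<epsilon>)) c i j k - c' i j k
        = poly (?S - [:c' i j k:] * det P) (of_real \<epsilon>) / poly (det P) (of_real \<epsilon>)"
    if "\<epsilon> \<in> {0<..1}" for \<epsilon>
    using nz[OF that] by (simp add: basis_change_eval_poly_matrix field_simps)
  have "((\<lambda>\<epsilon>. basis_change (eval_poly_matrix P (of_real \<epsilon>)) c i j k - c' i j k) \<longlongrightarrow> 0) (at_right 0)"
    using assms by (simp add: contracts_iff_basis_change LIM_zero)
  moreover have "eventually (\<lambda>\<epsilon>. basis_change (eval_poly_matrix P (of_real \<epsilon>)) c i j k - c' i j k
        = poly (?S - [:c' i j k:] * det P) (of_real \<epsilon>) / poly (det P) (of_real \<epsilon>)) (at_right 0)"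
    by (intro eventually_at_rightI[of 0 1] dev) auto
  ultimately show "((\<lambda>\<epsilon>. poly (?S - [:c' i j k:] * det P) (of_real \<epsilon>) / poly (det P) (of_real \<epsilon>))
      \<longlongrightarrow> 0) (at_right 0)"
    by (rule Lim_transform_eventually)
qed

lemma matrix_inv_mult_deviation_tendsto_zero:
  fixes Ph Pt :: "'a::real_normed_field poly^'n::finite^'n"
  assumes contr: "contracts g (\<lambda>\<epsilon>. eval_poly_matrix Ph (of_real \<epsilon>)) gh"
    and inv: "\<forall>\<epsilon>\<in>{0<..1}. invertible (eval_poly_matrix Pt (of_real \<epsilon>))"
    and N: "order 0 (det Pt) < N"
  shows "((\<lambda>\<epsilon>. matrix_inv (eval_poly_matrix Pt (of_real \<epsilon>)) $ d $ k
             * (basis_change (eval_poly_matrix Ph (of_real (\<epsilon> ^ N))) g i j k - gh i j k)) \<longlongrightarrow> 0) (at_right 0)"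
proof -
  have dt: "poly (det Pt) (of_real \<epsilon>) \<noteq> 0" if "\<epsilon> \<in> {0<..1}" for \<epsilon>
    using inv that by (simp add: invertible_eval_poly_matrix_iff)
  have dh: "poly (det Ph) (of_real \<epsilon>) \<noteq> 0" if "\<epsilon> \<in> {0<..1}" for \<epsilon>
    using contr that by (simp add: contracts_iff_basis_change invertible_eval_poly_matrix_iff)
  have "det Pt \<noteq> 0" "det Ph \<noteq> 0"
    using dt[of 1] dh[of 1] by auto
  obtain R where dev: "\<And>\<epsilon>. \<epsilon> \<in> {0<..1} \<Longrightarrow> basis_change (eval_poly_matrix Ph (of_real \<epsilon>)) g i j k - gh i j k
                                = poly R (of_real \<epsilon>) / poly (det Ph) (of_real \<epsilon>)"
    and lim: "((\<lambda>\<epsilon>. poly R (of_real \<epsilon>) / poly (det Ph) (of_real \<epsilon>)) \<longlongrightarrow> 0) (at_right 0)"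
    using contracts_poly_matrix_deviation_rational[OF contr] by blast
  have "((\<lambda>\<epsilon>. poly (adjugate Pt $ d $ k) (of_real \<epsilon>) / poly (det Pt) (of_real \<epsilon>)
           * (poly R (of_real (\<epsilon> ^ N)) / poly (det Ph) (of_real (\<epsilon> ^ N)))) \<longlongrightarrow> 0) (at_right 0)"
    using \<open>det Pt \<noteq> 0\<close> \<open>det Ph \<noteq> 0\<close> N lim by (rule rational_mult_compose_power_tendsto_zero)
  moreover have "eventually (\<lambda>\<epsilon>. poly (adjugate Pt $ d $ k) (of_real \<epsilon>) / poly (det Pt) (of_real \<epsilon>)
           * (poly R (of_real (\<epsilon> ^ N)) / poly (det Ph) (of_real (\<epsilon> ^ N)))
         = matrix_inv (eval_poly_matrix Pt (of_real \<epsilon>)) $ d $ k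
           * (basis_change (eval_poly_matrix Ph (of_real (\<epsilon> ^ N))) g i j k - gh i j k)) (at_right 0)"
  proof (rule eventually_at_rightI[of 0 1])
    fix \<epsilon> :: real assume "\<epsilon> \<in> {0<..<1}"
    then have "\<epsilon> \<in> {0<..1}" "\<epsilon> ^ N \<in> {0<..1}"
      by (simp_all add: power_le_one)
    from matrix_inv_eval_poly_matrix[OF dt[OF this(1)]] dev[OF this(2)]
    show "poly (adjugate Pt $ d $ k) (of_real \<epsilon>) / poly (det Pt) (of_real \<epsilon>)
           * (poly R (of_real (\<epsilon> ^ N)) / poly (det Ph) (of_real (\<epsilon> ^ N)))
         = matrix_inv (eval_poly_matrix Pt (of_real \<epsilon>)) $ d $ k
           * (basis_change (eval_poly_matrix Ph (of_real (\<epsilon> ^ N))) g i j k - gh i j k)"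
      by simp
  qed simp
  ultimately show ?thesis
    by (rule Lim_transform_eventually)
qed

lemma basis_change_deviation_tendsto_zero:
  fixes Ph Pt :: "'a::real_normed_field poly^'n::finite^'n"
  assumes "contracts g (\<lambda>\<epsilon>. eval_poly_matrix Ph (of_real \<epsilon>)) gh"
    and "\<forall>\<epsilon>\<in>{0<..1}. invertible (eval_poly_matrix Pt (of_real \<epsilon>))"
    and "order 0 (det Pt) < N"
  shows "((\<lambda>\<epsilon>. basis_change (eval_poly_matrix Pt (of_real \<epsilon>))
            (basis_change (eval_poly_matrix Ph (of_real (\<epsilon> ^ N))) g - gh) a b d) \<longlongrightarrow> 0) (at_right 0)"
  unfolding basis_change_def[of "eval_poly_matrix Pt _"]
proof (intro tendsto_null_sum)
  fix i j k
  have "((\<lambda>\<epsilon>. eval_poly_matrix Pt (of_real \<epsilon>) $ i $ j) \<longlongrightarrow> poly (Pt $ i $ j) 0) (at_right 0)" for i j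
    by (simp add: eval_poly_matrix_def tendsto_poly_of_real_at_right_0)
  from tendsto_mult[OF tendsto_mult[OF this this] matrix_inv_mult_deviation_tendsto_zero[OF assms]]
  show "((\<lambda>\<epsilon>. eval_poly_matrix Pt (of_real \<epsilon>) $ i $ a * eval_poly_matrix Pt (of_real \<epsilon>) $ j $ b
           * matrix_inv (eval_poly_matrix Pt (of_real \<epsilon>)) $ d $ k
           * (basis_change (eval_poly_matrix Ph (of_real (\<epsilon> ^ N))) g - gh) i j k) \<longlongrightarrow> 0) (at_right 0)"
    by (simp add: mult.assoc)
qed

lemma contracts_trans_poly_matrix_fun:
  fixes g gh gt :: "'n::finite \<Rightarrow> 'n \<Rightarrow> 'n \<Rightarrow> 'a::real_normed_field"
  assumes "contracts g Uh gh" "poly_matrix_fun Uh" "contracts gh Ut gt" "poly_matrix_fun Ut"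
  shows "\<exists>U. contracts g U gt \<and> poly_matrix_fun U"
proof -
  obtain Ph Pt where Ph: "Uh = (\<lambda>\<epsilon>. eval_poly_matrix Ph (of_real \<epsilon>))"
    and Pt: "Ut = (\<lambda>\<epsilon>. eval_poly_matrix Pt (of_real \<epsilon>))"
    using assms(2,4) unfolding poly_matrix_fun_iff_eval by blast
  define N where "N = Suc (order 0 (det Pt))"
  define U where "U = (\<lambda>\<epsilon>. Uh (\<epsilon> ^ N) ** Ut \<epsilon>)"
  have inv_h: "\<forall>\<epsilon>\<in>{0<..1}. invertible (Uh \<epsilon>)" and inv_t: "\<forall>\<epsilon>\<in>{0<..1}. invertible (Ut \<epsilon>)"
    using assms(1,3) by (simp_all add: contracts_iff_basis_change)
  then have inv: "\<forall>\<epsilon>\<in>{0<..1}. invertible (U \<epsilon>)"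
    by (simp add: U_def power_le_one invertible_mult)
  have split: "basis_change (Ut \<epsilon>) gh a b d + basis_change (Ut \<epsilon>) (basis_change (Uh (\<epsilon> ^ N)) g - gh) a b d
      = basis_change (U \<epsilon>) g a b d"
    if "\<epsilon> \<in> {0<..1}" for \<epsilon> a b d
    using that inv_h inv_t by (simp add: U_def basis_change_mult basis_change_diff power_le_one)
  have "((\<lambda>\<epsilon>. basis_change (Ut \<epsilon>) gh a b d) \<longlongrightarrow> gt a b d) (at_right 0)" for a b d
    using assms(3) by (simp add: contracts_iff_basis_change)
  moreover have "((\<lambda>\<epsilon>. basis_change (Ut \<epsilon>) (basis_change (Uh (\<epsilon> ^ N)) g - gh) a b d) \<longlongrightarrow> 0) (at_right 0)"
    for a b d
    using assms(1) inv_t unfolding Ph Pt N_def by (intro basis_change_deviation_tendsto_zero) simp_all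
  ultimately have "((\<lambda>\<epsilon>. basis_change (Ut \<epsilon>) gh a b d
      + basis_change (Ut \<epsilon>) (basis_change (Uh (\<epsilon> ^ N)) g - gh) a b d) \<longlongrightarrow> gt a b d) (at_right 0)" for a b d
    using tendsto_add by fastforce
  then have "((\<lambda>\<epsilon>. basis_change (U \<epsilon>) g a b d) \<longlongrightarrow> gt a b d) (at_right 0)" for a b d
    by (rule Lim_transform_eventually[OF _ eventually_at_rightI[of 0 1]]) (simp_all add: split)
  moreover have "poly_matrix_fun U"
    unfolding U_def using assms(2,4) by (intro poly_matrix_fun_mult poly_matrix_fun_compose_power)
  ultimately show ?thesis
    using inv poly_matrix_fun_continuous_on unfolding contracts_iff_basis_change by blast
qed

theorem mainTheorem13:
  shows
  "(\<forall>(g :: 'n::finite \<Rightarrow> 'n \<Rightarrow> 'n \<Rightarrow> real) gh gt Uh Ut.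
      is_lie_algebra g \<and> is_lie_algebra gh \<and> is_lie_algebra gt \<and>
      contracts g Uh gh \<and> poly_matrix_fun Uh \<and>
      contracts gh Ut gt \<and> poly_matrix_fun Ut \<longrightarrow>
      (\<exists>U. contracts g U gt \<and> poly_matrix_fun U)) \<and>
   (\<forall>(g :: 'n \<Rightarrow> 'n \<Rightarrow> 'n \<Rightarrow> complex) gh gt Uh Ut.
      is_lie_algebra g \<and> is_lie_algebra gh \<and> is_lie_algebra gt \<and>
      contracts g Uh gh \<and> poly_matrix_fun Uh \<and>
      contracts gh Ut gt \<and> poly_matrix_fun Ut \<longrightarrow>
      (\<exists>U. contracts g U gt \<and> poly_matrix_fun U))"
  by (blast intro: contracts_trans_poly_matrix_fun)

end
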